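(* In a phase space $Z_1$, every real number $\mu$ is the exponential growth rate of some solution of the linearized Euler system with initial value in $Z_1$ (i.e. the set of finite exponential growth rates of such solutions is $\mathbb{R}$). Moreover, there exist initial values in $Z_1$ for which the exponential growth rate of the corresponding solution equals $+\infty$.
   Context: Fix constants $U_0,c_0,\rho_0>0$. Linearized Euler system: $\partial_t v_x' + U_0\partial_x v_x' + \frac1{\rho_0}\partial_x p' = 0$, $\partial_t v_y' + U_0\partial_x v_y' + \frac1{\rho_0}\partial_y p' = 0$, $\partial_t v_z' + U_0\partial_x v_z' + \frac1{\rho_0}\partial_z p' = 0$, $\partial_t p' + U_0\partial_xp' + \rho_0c_0^2(\partial_xv_x'+\partial_yv_y'+\partial_zv_z') = 0$. Phase space $Z_1$: fix real constants $k_i,l_i,m_i$ ($i=1,\dots,4$) with $k_1k_2k_3k_4\neq0$ and $\Delta = \frac{c_0\rho_0}{k_3k_4}[r_1(k_2k_3k_4+k_3m_2m_4+k_4l_2l_3) + r_2(k_1k_3k_4+k_3m_1m_4+k_4l_1l_3)]\neq0$, $r_i=\sqrt{k_i^2+l_i^2+m_i^2}$. With $\xi_i=k_ix+l_iy+m_iz$, $Z_1$ is the set of systems $(F,G,H,P)$ of the form $F = k_1f_1(\xi_1)+k_2f_2(\xi_2)+\frac{l_3}{k_3}f_3(\xi_3)+\frac{m_4}{k_4}f_4(\xi_4)$, $G = l_1f_1(\xi_1)+l_2f_2(\xi_2)-f_3(\xi_3)$, $H = m_1f_1(\xi_1)+m_2f_2(\xi_2)-f_4(\xi_4)$, $P =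 -c_0\rho_0r_1f_1(\xi_1)+c_0\rho_0r_2f_2(\xi_2)$ with $f_i:\mathbb{R}\to\mathbb{R}$ continuously differentiable, with the topology of uniform convergence on $\mathbb{R}^3$. The exponential growth rate of a solution $(v_x',v_y',v_z',p')$ is $\nu = \max\{\sup_{(x,y,z)}\limsup_{t\to\infty}\frac{\ln|v_x'(x,y,z,t)|}{t},\ \text{same for } v_y',\ v_z',\ p'\}$. *)

theory Defs
  imports "HOL-Analysis.Analysis" "HOL-Library.Liminf_Limsup"
begin

type_synonym pt3 = "real \<times> real \<times> real"
type_synonym pt4 = "real \<times> real \<times> real \<times> real"  (* (x, y, z, t) *)

definition C1_R4 :: "(pt4 \<Rightarrow> real) \<Rightarrow> bool" where
  "C1_R4 u \<longleftrightarrow> (\<exists>D :: pt4 \<Rightarrow> (pt4 \<Rightarrow>\<^sub>L real).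
      (\<forall>w. (u has_derivative blinfun_apply (D w)) (at w)) \<and> continuous_on UNIV D)"

definition dx :: "(pt4 \<Rightarrow> real) \<Rightarrow> pt4 \<Rightarrow> real" where
  "dx u w = frechet_derivative u (at w) (1, 0, 0, 0)"
definition dy :: "(pt4 \<Rightarrow> real) \<Rightarrow> pt4 \<Rightarrow> real" where
  "dy u w = frechet_derivative u (at w) (0, 1, 0, 0)"
definition dz :: "(pt4 \<Rightarrow> real) \<Rightarrow> pt4 \<Rightarrow> real" where
  "dz u w = frechet_derivative u (at w) (0, 0, 1, 0)"
definition dt :: "(pt4 \<Rightarrow> real) \<Rightarrow> pt4 \<Rightarrow> real" where
  "dt u w = frechet_derivative u (at w) (0, 0, 0, 1)"

definition lin_euler_solution ::
  "real \<Rightarrow> real \<Rightarrow> real \<Rightarrow> (pt4 \<Rightarrow> real) \<Rightarrow> (pt4 \<Rightarrow> real) \<Rightarrow> (pt4 \<Rightarrow> real) \<Rightarrow> (pt4 \<Rightarrow> real) \<Rightarrow> bool"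
where
  "lin_euler_solution U0 c0 rho0 vx vy vz p \<longleftrightarrow>
     C1_R4 vx \<and> C1_R4 vy \<and> C1_R4 vz \<and> C1_R4 p \<and>
     (\<forall>w. dt vx w + U0 * dx vx w + (1 / rho0) * dx p w = 0) \<and>
     (\<forall>w. dt vy w + U0 * dx vy w + (1 / rho0) * dy p w = 0) \<and>
     (\<forall>w. dt vz w + U0 * dx vz w + (1 / rho0) * dz p w = 0) \<and>
     (\<forall>w. dt p w + U0 * dx p w + rho0 * c0\<^sup>2 * (dx vx w + dy vy w + dz vz w) = 0)"

definition has_initial_value ::
  "(pt4 \<Rightarrow> real) \<Rightarrow> (pt4 \<Rightarrow> real) \<Rightarrow> (pt4 \<Rightarrow> real) \<Rightarrow> (pt4 \<Rightarrow> real) \<Rightarrow>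
   (pt3 \<Rightarrow> real) \<times> (pt3 \<Rightarrow> real) \<times> (pt3 \<Rightarrow> real) \<times> (pt3 \<Rightarrow> real) \<Rightarrow> bool"
where
  "has_initial_value vx vy vz p FGHP \<longleftrightarrow>
     (case FGHP of (F, G, H, P) \<Rightarrow>
       (\<forall>x y z. vx (x, y, z, 0) = F (x, y, z) \<and> vy (x, y, z, 0) = G (x, y, z) \<and>
                vz (x, y, z, 0) = H (x, y, z) \<and> p (x, y, z, 0) = P (x, y, z)))"

definition eln_abs :: "real \<Rightarrow> ereal" where
  "eln_abs r = (if r = 0 then -\<infinity> else ereal (ln \<bar>r\<bar>))"

definition comp_growth :: "(pt4 \<Rightarrow> real) \<Rightarrow> ereal" where
  "comp_growth u = (SUP q \<in> (UNIV :: pt3 set).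
      Limsup at_top (\<lambda>t::real. eln_abs (u (fst q, fst (snd q), snd (snd q), t)) / ereal t))"

definition growth_rate ::
  "(pt4 \<Rightarrow> real) \<Rightarrow> (pt4 \<Rightarrow> real) \<Rightarrow> (pt4 \<Rightarrow> real) \<Rightarrow> (pt4 \<Rightarrow> real) \<Rightarrow> ereal" where
  "growth_rate vx vy vz p =
     max (max (comp_growth vx) (comp_growth vy)) (max (comp_growth vz) (comp_growth p))"

definition rr :: "(nat \<Rightarrow> real) \<Rightarrow> (nat \<Rightarrow> real) \<Rightarrow> (nat \<Rightarrow> real) \<Rightarrow> nat \<Rightarrow> real" where
  "rr k l m i = sqrt ((k i)\<^sup>2 + (l i)\<^sup>2 + (m i)\<^sup>2)"

definition Delta :: "real \<Rightarrow> real \<Rightarrow> (nat \<Rightarrow> real) \<Rightarrow> (nat \<Rightarrow> real) \<Rightarrow> (nat \<Rightarrow> real) \<Rightarrow> real" where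
  "Delta c0 rho0 k l m = c0 * rho0 / (k 3 * k 4) *
     (rr k l m 1 * (k 2 * k 3 * k 4 + k 3 * m 2 * m 4 + k 4 * l 2 * l 3)
    + rr k l m 2 * (k 1 * k 3 * k 4 + k 3 * m 1 * m 4 + k 4 * l 1 * l 3))"

definition Z1 :: "real \<Rightarrow> real \<Rightarrow> (nat \<Rightarrow> real) \<Rightarrow> (nat \<Rightarrow> real) \<Rightarrow> (nat \<Rightarrow> real) \<Rightarrow>
   ((pt3 \<Rightarrow> real) \<times> (pt3 \<Rightarrow> real) \<times> (pt3 \<Rightarrow> real) \<times> (pt3 \<Rightarrow> real)) set" where
  "Z1 c0 rho0 k l m = {(F, G, H, P). \<exists>f :: nat \<Rightarrow> real \<Rightarrow> real.
     (\<forall>i\<in>{1..4}. f i C1_differentiable_on UNIV) \<and>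
     (\<forall>x y z. let \<xi> = (\<lambda>i. k i * x + l i * y + m i * z) in
        F (x, y, z) = k 1 * f 1 (\<xi> 1) + k 2 * f 2 (\<xi> 2) + l 3 / k 3 * f 3 (\<xi> 3) + m 4 / k 4 * f 4 (\<xi> 4) \<and>
        G (x, y, z) = l 1 * f 1 (\<xi> 1) + l 2 * f 2 (\<xi> 2) - f 3 (\<xi> 3) \<and>
        H (x, y, z) = m 1 * f 1 (\<xi> 1) + m 2 * f 2 (\<xi> 2) - f 4 (\<xi> 4) \<and>
        P (x, y, z) = - c0 * rho0 * rr k l m 1 * f 1 (\<xi> 1) + c0 * rho0 * rr k l m 2 * f 2 (\<xi> 2))}"

end

theory Submission
  imports Defs "HOL-Real_Asymp.Real_Asymp"
begin

text \<open>For any \<open>C\<^sup>1\<close> profile \<open>g\<close>, the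
  velocity \<open>(l\<^sub>3/k\<^sub>3, -1, 0) g(k\<^sub>3x + l\<^sub>3y + m\<^sub>3z - k\<^sub>3U\<^sub>0t)\<close> with zero pressure solves the
  linearized Euler system exactly: the amplitude is orthogonal to the wave vector, so the
  divergence vanishes, and the wave is merely advected by the mean flow. Taking \<open>g = exp \<circ> \<phi>\<close>,
  \<open>ln |v| / t\<close> behaves like \<open>\<phi>(s - k\<^sub>3U\<^sub>0t) / t\<close>, which tends to \<open>\<mu>\<close> for a suitable linear \<open>\<phi>\<close>
  and to \<open>+\<infinity>\<close> for \<open>\<phi>(s) = s\<^sup>2\<close>.\<close>

definition plane_phase :: "real \<Rightarrow> real \<Rightarrow> real \<Rightarrow> real \<Rightarrow> pt4 \<Rightarrow> real" where
  "plane_phase A B C b w = A * fst w + B * fst (snd w) + C * fst (snd (snd w)) - b * snd (snd (snd w))"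

definition plane_wave :: "real \<Rightarrow> (real \<Rightarrow> real) \<Rightarrow> real \<Rightarrow> real \<Rightarrow> real \<Rightarrow> real \<Rightarrow> pt4 \<Rightarrow> real" where
  "plane_wave c g A B C b w = c * g (plane_phase A B C b w)"

lemma C1_differentiable_on_UNIV_iff:
  fixes g :: "real \<Rightarrow> real"
  shows "g C1_differentiable_on UNIV \<longleftrightarrow>
    (\<forall>s. (g has_real_derivative deriv g s) (at s)) \<and> continuous_on UNIV (deriv g)"
proof -
  have "vector_derivative g (at s) = deriv g s" if "g differentiable at s" for s
    using that field_derivative_eq_vector_derivative by simp
  then show ?thesis
    unfolding C1_differentiable_on_eq DERIV_deriv_iff_real_differentiable
    by (metis (no_types, lifting) UNIV_I continuous_on_cong)
qed

lemma C1_differentiable_on_exp_compose: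
  fixes \<phi> :: "real \<Rightarrow> real"
  assumes "\<phi> C1_differentiable_on UNIV"
  shows "(\<lambda>s. exp (\<phi> s)) C1_differentiable_on UNIV"
proof -
  have d: "\<And>s. (\<phi> has_real_derivative deriv \<phi> s) (at s)" and c: "continuous_on UNIV (deriv \<phi>)"
    using assms by (auto simp: C1_differentiable_on_UNIV_iff)
  have "((\<lambda>s. exp (\<phi> s)) has_vector_derivative exp (\<phi> s) * deriv \<phi> s) (at s)" for s
    using d by (auto intro!: derivative_eq_intros simp: has_real_derivative_iff_has_vector_derivative[symmetric])
  moreover have "continuous_on UNIV (\<lambda>s. exp (\<phi> s) * deriv \<phi> s)"
    using c d by (intro continuous_intros) (auto intro: DERIV_isCont continuous_at_imp_continuous_on)
  ultimately show ?thesis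
    unfolding C1_differentiable_on_def by (intro exI[of _ "\<lambda>s. exp (\<phi> s) * deriv \<phi> s"]) auto
qed

lemma has_derivative_plane_phase: "(plane_phase A B C b has_derivative plane_phase A B C b) (at w)"
  unfolding plane_phase_def[abs_def]
  by (rule has_derivative_eq_rhs, (rule derivative_intros)+) (auto simp: algebra_simps)

lemma has_derivative_plane_wave:
  assumes "g C1_differentiable_on UNIV"
  shows "(plane_wave c g A B C b has_derivative
          (\<lambda>h. c * deriv g (plane_phase A B C b w) * plane_phase A B C b h)) (at w)"
proof -
  have "(g has_real_derivative deriv g s) (at s)" for s
    using assms by (simp add: C1_differentiable_on_UNIV_iff)
  from has_derivative_compose[OF has_derivative_plane_phase has_field_derivative_imp_has_derivative[OF this]]
  have "((\<lambda>w. g (plane_phase A B C b w)) has_derivative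
          (\<lambda>h. deriv g (plane_phase A B C b w) * plane_phase A B C b h)) (at w)" .
  from has_derivative_mult_right[OF this, of c] show ?thesis
    unfolding plane_wave_def[abs_def] by (simp add: mult.assoc)
qed

lemma C1_R4_plane_wave:
  assumes "g C1_differentiable_on UNIV"
  shows "C1_R4 (plane_wave c g A B C b)"
proof -
  have lin: "bounded_linear (plane_phase A B C b)"
    using has_derivative_plane_phase has_derivative_bounded_linear by blast
  define D where "D w = (c * deriv g (plane_phase A B C b w)) *\<^sub>R Blinfun (plane_phase A B C b)" for w
  have "blinfun_apply (D w) = (\<lambda>h. c * deriv g (plane_phase A B C b w) * plane_phase A B C b h)" for w
    by (auto simp: D_def scaleR_blinfun.rep_eq bounded_linear_Blinfun_apply[OF lin])
  moreover have "continuous_on UNIV D"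
  proof -
    have "continuous_on UNIV (deriv g)"
      using assms by (simp add: C1_differentiable_on_UNIV_iff)
    from continuous_on_compose2[OF this linear_continuous_on[OF lin]]
    have "continuous_on UNIV (\<lambda>w. deriv g (plane_phase A B C b w))" by simp
    then show ?thesis unfolding D_def by (intro continuous_intros)
  qed
  ultimately show ?thesis
    unfolding C1_R4_def using has_derivative_plane_wave[OF assms] by metis
qed

lemma
  assumes "g C1_differentiable_on UNIV"
  shows dx_plane_wave: "dx (plane_wave c g A B C b) w = c * deriv g (plane_phase A B C b w) * A"
    and dy_plane_wave: "dy (plane_wave c g A B C b) w = c * deriv g (plane_phase A B C b w) * B"
    and dz_plane_wave: "dz (plane_wave c g A B C b) w = c * deriv g (plane_phase A B C b w) * C"
    and dt_plane_wave: "dt (plane_wave c g A B C b) w = - c * deriv g (plane_phase A B C b w) * b"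
  unfolding dx_def dy_def dz_def dt_def
    frechet_derivative_at[OF has_derivative_plane_wave[OF assms, of c A B C b w], symmetric]
  by (simp_all add: plane_phase_def)

lemma lin_euler_solution_transverse_wave:
  assumes "g C1_differentiable_on UNIV" and "a1 * K + a2 * L + a3 * M = 0"
  shows "lin_euler_solution U0 c0 rho0
    (plane_wave a1 g K L M (K * U0)) (plane_wave a2 g K L M (K * U0))
    (plane_wave a3 g K L M (K * U0)) (plane_wave 0 g K L M (K * U0))"
proof -
  have "a1 * g' * K + a2 * g' * L + a3 * g' * M = g' * (a1 * K + a2 * L + a3 * M)" for g'
    by (simp add: algebra_simps)
  then have "a1 * g' * K + a2 * g' * L + a3 * g' * M = 0" for g'
    using assms(2) by simp
  then show ?thesis
    unfolding lin_euler_solution_def using assms(1)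
    by (simp add: C1_R4_plane_wave dx_plane_wave dy_plane_wave dz_plane_wave dt_plane_wave)
qed

lemma transverse_wave_in_Z1:
  assumes "k 3 \<noteq> 0" and "g C1_differentiable_on UNIV"
  shows "(\<lambda>(x, y, z). l 3 / k 3 * g (k 3 * x + l 3 * y + m 3 * z),
          \<lambda>(x, y, z). - g (k 3 * x + l 3 * y + m 3 * z), \<lambda>_. 0, \<lambda>_. 0) \<in> Z1 c0 rho0 k l m"
proof -
  define f :: "nat \<Rightarrow> real \<Rightarrow> real" where "f i = (if i = 3 then g else (\<lambda>_. 0))" for i
  have "\<forall>i\<in>{1..4}. f i C1_differentiable_on UNIV"
    using assms(2) by (simp add: f_def)
  then show ?thesis
    unfolding Z1_def using assms(1) by (auto simp: f_def Let_def intro!: exI[of _ f])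
qed

lemma comp_growth_zero: "comp_growth (\<lambda>w. 0) = -\<infinity>"
proof -
  have "Limsup at_top (\<lambda>t::real. eln_abs 0 / ereal t) = -\<infinity>"
  proof -
    have "Limsup at_top (\<lambda>t::real. eln_abs 0 / ereal t) \<le> Limsup at_top (\<lambda>t::real. -\<infinity>)"
      by (rule Limsup_mono) (auto simp: eln_abs_def intro: eventually_mono[OF eventually_gt_at_top[of 0]])
    then show ?thesis by (simp add: Limsup_const)
  qed
  then show ?thesis unfolding comp_growth_def by simp
qed

lemma comp_growth_plane_wave_exp:
  fixes \<phi> :: "real \<Rightarrow> real"
  assumes lim: "\<And>s. ((\<lambda>t. ereal (\<phi> (s - b * t) / t)) \<longlongrightarrow> M) at_top"
  shows "comp_growth (plane_wave c (\<lambda>s. exp (\<phi> s)) A B C b) = (if c = 0 then -\<infinity> else M)"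
proof (cases "c = 0")
  case True
  then have "plane_wave c (\<lambda>s. exp (\<phi> s)) A B C b = (\<lambda>w. 0)"
    by (simp add: plane_wave_def fun_eq_iff)
  with True show ?thesis by (simp add: comp_growth_zero)
next
  case False
  have "Limsup at_top (\<lambda>t. eln_abs (plane_wave c (\<lambda>s. exp (\<phi> s)) A B C b (x, y, z, t)) / ereal t) = M"
    for x y z
  proof -
    define s where "s = A * x + B * y + C * z"
    have "((\<lambda>t. ln \<bar>c\<bar> / t) \<longlongrightarrow> 0) at_top" by real_asymp
    then have "((\<lambda>t. ereal (ln \<bar>c\<bar> / t) + ereal (\<phi> (s - b * t) / t)) \<longlongrightarrow> 0 + M) at_top"
      by (intro tendsto_add_ereal_general lim) (auto simp: zero_ereal_def intro: tendsto_ereal)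
    moreover have "\<forall>\<^sub>F t in at_top. ereal (ln \<bar>c\<bar> / t) + ereal (\<phi> (s - b * t) / t) =
        eln_abs (plane_wave c (\<lambda>s. exp (\<phi> s)) A B C b (x, y, z, t)) / ereal t"
      using eventually_gt_at_top[of 0] by eventually_elim
        (use False in \<open>simp add: eln_abs_def plane_wave_def plane_phase_def s_def
                                   abs_mult ln_mult add_divide_distrib\<close>)
    ultimately show ?thesis
      by (auto intro: lim_imp_Limsup dest: tendsto_cong[THEN iffD1, rotated])
  qed
  with False show ?thesis unfolding comp_growth_def by simp
qed

lemma tendsto_linear_phase_over_time:
  assumes "b \<noteq> 0"
  shows "((\<lambda>t. ereal (a * (s - b * t) / t)) \<longlongrightarrow> ereal (- a * b)) at_top"
proof -
  have "((\<lambda>t. a * s / t - a * b) \<longlongrightarrow> - a * b) at_top" by real_asymp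
  then have "((\<lambda>t. a * (s - b * t) / t) \<longlongrightarrow> - a * b) at_top"
    by (rule Lim_transform_eventually) (auto intro: eventually_mono[OF eventually_gt_at_top[of 0]] simp: field_simps)
  then show ?thesis by (rule tendsto_ereal)
qed

lemma tendsto_square_phase_over_time:
  assumes "b \<noteq> 0"
  shows "((\<lambda>t. ereal ((s - b * t)\<^sup>2 / t)) \<longlongrightarrow> \<infinity>) at_top"
proof -
  have "b\<^sup>2 > 0" using assms by simp
  then have "filterlim (\<lambda>t. b\<^sup>2 * t - 2 * b * s + s\<^sup>2 / t) at_top at_top" by real_asymp
  then have "filterlim (\<lambda>t. (s - b * t)\<^sup>2 / t) at_top at_top"
    by (rule filterlim_cong[THEN iffD1, OF refl refl, rotated])
       (auto intro: eventually_mono[OF eventually_gt_at_top[of 0]] simp: field_simps power2_eq_square)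
  then show ?thesis by (simp add: tendsto_PInfty_eq_at_top)
qed

lemma exists_Z1_solution_with_growth_rate:
  fixes \<phi> :: "real \<Rightarrow> real"
  assumes "k 3 \<noteq> 0" and "\<phi> C1_differentiable_on UNIV"
    and "\<And>s. ((\<lambda>t. ereal (\<phi> (s - k 3 * U0 * t) / t)) \<longlongrightarrow> M) at_top"
  shows "\<exists>FGHP vx vy vz p. FGHP \<in> Z1 c0 rho0 k l m \<and>
           lin_euler_solution U0 c0 rho0 vx vy vz p \<and> has_initial_value vx vy vz p FGHP \<and>
           growth_rate vx vy vz p = M"
proof -
  define g where "g s = exp (\<phi> s)" for s
  have g: "g C1_differentiable_on UNIV"
    unfolding g_def using assms(2) by (rule C1_differentiable_on_exp_compose)
  let ?w = "\<lambda>c. plane_wave c g (k 3) (l 3) (m 3) (k 3 * U0)"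
  have "lin_euler_solution U0 c0 rho0 (?w (l 3 / k 3)) (?w (-1)) (?w 0) (?w 0)"
    using assms(1) by (intro lin_euler_solution_transverse_wave g) simp
  moreover have "growth_rate (?w (l 3 / k 3)) (?w (-1)) (?w 0) (?w 0) = M"
    unfolding growth_rate_def g_def comp_growth_plane_wave_exp[OF assms(3)]
    by (simp add: max_def)
  moreover have "has_initial_value (?w (l 3 / k 3)) (?w (-1)) (?w 0) (?w 0)
      (\<lambda>(x, y, z). l 3 / k 3 * g (k 3 * x + l 3 * y + m 3 * z),
       \<lambda>(x, y, z). - g (k 3 * x + l 3 * y + m 3 * z), \<lambda>_. 0, \<lambda>_. 0)"
    by (simp add: has_initial_value_def plane_wave_def plane_phase_def)
  ultimately show ?thesis
    using transverse_wave_in_Z1[where k = k, OF assms(1) g] by blast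
qed

theorem proposition13:
  fixes U0 c0 rho0 :: real and k l m :: "nat \<Rightarrow> real"
  assumes "U0 > 0" and "c0 > 0" and "rho0 > 0"
    and "k 1 * k 2 * k 3 * k 4 \<noteq> 0"
    and "Delta c0 rho0 k l m \<noteq> 0"
  shows "(\<forall>\<mu>::real. \<exists>FGHP vx vy vz p. FGHP \<in> Z1 c0 rho0 k l m \<and>
            lin_euler_solution U0 c0 rho0 vx vy vz p \<and> has_initial_value vx vy vz p FGHP \<and>
            growth_rate vx vy vz p = ereal \<mu>)
       \<and> (\<exists>FGHP vx vy vz p. FGHP \<in> Z1 c0 rho0 k l m \<and>
            lin_euler_solution U0 c0 rho0 vx vy vz p \<and> has_initial_value vx vy vz p FGHP \<and>
            growth_rate vx vy vz p = \<infinity>)"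
proof -
  have k3: "k 3 \<noteq> 0" using assms(4) by auto
  have b: "k 3 * U0 \<noteq> 0" using k3 assms(1) by simp
  have "\<exists>FGHP vx vy vz p. FGHP \<in> Z1 c0 rho0 k l m \<and>
          lin_euler_solution U0 c0 rho0 vx vy vz p \<and> has_initial_value vx vy vz p FGHP \<and>
          growth_rate vx vy vz p = ereal \<mu>" for \<mu>
  proof (rule exists_Z1_solution_with_growth_rate[where k = k and \<phi> = "\<lambda>s. - \<mu> / (k 3 * U0) * s", OF k3])
    show "((\<lambda>t. ereal (- \<mu> / (k 3 * U0) * (s - k 3 * U0 * t) / t)) \<longlongrightarrow> ereal \<mu>) at_top" for s
      using tendsto_linear_phase_over_time[OF b, of "- \<mu> / (k 3 * U0)" s] b by simp
  qed (intro derivative_intros)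
  moreover have "\<exists>FGHP vx vy vz p. FGHP \<in> Z1 c0 rho0 k l m \<and>
          lin_euler_solution U0 c0 rho0 vx vy vz p \<and> has_initial_value vx vy vz p FGHP \<and>
          growth_rate vx vy vz p = \<infinity>"
  proof (rule exists_Z1_solution_with_growth_rate[where k = k and \<phi> = "\<lambda>s. s * s", OF k3])
    show "((\<lambda>t. ereal ((s - k 3 * U0 * t) * (s - k 3 * U0 * t) / t)) \<longlongrightarrow> \<infinity>) at_top" for s
      using tendsto_square_phase_over_time[OF b, of s] by (simp add: power2_eq_square)
  qed (intro derivative_intros)
  ultimately show ?thesis by blast
qed

end
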